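(* For all integers $t\ge0$ and $k\ge0$, \[\kappa_2(2^{k+1}t+2^k-1)=\frac{(2^k+1)\kappa_2(t)}{2^{k+1}}+\frac{(2^k-1)\kappa_2(t+1)}{2^{k+1}}+\frac{3(2^k-1)}{2^k},\] and \[D(2^{k+1}t+2^k-1)=\frac{2^k+1}{2^{k+1}}D(t)+\frac{2^k-1}{2^{k+1}}D(t+1)+\Bigl(\frac12+\frac{k-1}{2^{k+1}}\Bigr)\bigl(\kappa_2(t+1)-\kappa_2(t)\bigr)+1+\frac{3k-1}{2^k}.\]
   Context: $s(n)$ is the number of $1$s in the binary expansion of $n\ge0$; $\delta(j,t)=\lim_{N\to\infty}\frac1N|\{0\le n<N: s(n+t)-s(n)=j\}|$ for $j\in\mathbb Z$, a probability distribution on $\mathbb Z$, and $\kappa_j(t)$ denotes its $j$-th cumulant ($\log\sum_k\delta(k,t)e^{2\pi ik\vartheta}=\sum_{j\ge0}\frac{\kappa_j(t)}{j!}(2\pi i\vartheta)^j$ near $\vartheta=0$). Set $D(t)=\kappa_2(t)-\kappa_3(t)/3$. *)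

theory Defs
  imports "HOL-Complex_Analysis.Complex_Analysis"
begin

fun s :: "nat \<Rightarrow> nat" where
  "s n = (if n = 0 then 0 else n mod 2 + s (n div 2))"

definition delta :: "int \<Rightarrow> nat \<Rightarrow> real" where
  "delta j t = lim (\<lambda>N. real (card {n. n < N \<and> int (s (n + t)) - int (s n) = j}) / real N)"

definition charf :: "nat \<Rightarrow> complex \<Rightarrow> complex" where
  "charf t z = (\<Sum>\<^sub>\<infinity>k\<in>(UNIV::int set). complex_of_real (delta k t) * exp (2 * pi * \<i> * of_int k * z))"

text \<open>j-th cumulant: the Taylor coefficients of log charf at 0 in powers of 2 pi i z, times j!.\<close>
definition kappa :: "nat \<Rightarrow> nat \<Rightarrow> complex" where
  "kappa j t = (deriv ^^ j) (\<lambda>z. Ln (charf t z)) 0 / (2 * pi * \<i>) ^ j"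

definition D :: "nat \<Rightarrow> complex" where
  "D t = kappa 2 t - kappa 3 t / 3"

end

theory Submission
  imports Defs "HOL-Probability.Characteristic_Functions" "HOL-Real_Asymp.Real_Asymp"
begin

text \<open>
  Splitting n by parity gives delta(j, 2u) = delta(j, u) and
  delta(j, 2u+1) = (delta(j-1, u) + delta(j+1, u+1)) / 2; the same splitting shows that the
  densities exist. Hence charf (2u) = charf u and
  2 charf (2u+1) z = e^(2 pi i z) charf u z + e^(-2 pi i z) charf (u+1) z, where the series
  converge near 0 because delta(j, t) = 0 for j > t and delta(j, t) = O(2^j) as j tends to minus
  infinity. As delta(-, t) has mass 1 and mean 0, kappa_2 and kappa_3 are, up to powers of
  2 pi i, the second and third derivatives of charf at 0, and differentiating the recursion gives
  kappa_2(2u+1) = (kappa_2(u) + kappa_2(u+1))/2 + 1 and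
  D(2u+1) = (D(u) + D(u+1))/2 + (kappa_2(u+1) - kappa_2(u))/2 + 1.
  The theorem follows by induction on k: with T = 2^(k+1) t + 2^k - 1 the next argument is 2T + 1,
  and T + 1 = 2^k (2t + 1).
\<close>

declare s.simps [simp del]

lemma s_double [simp]: "s (2 * m) = s m"
  by (cases "m = 0") (simp_all add: s.simps[of "2 * m"])

lemma s_Suc_double [simp]: "s (Suc (2 * m)) = Suc (s m)"
  by (simp add: s.simps[of "Suc (2 * m)"])

lemma s_Suc_le: "s (Suc n) \<le> Suc (s n)"
proof (induction n rule: less_induct)
  case (less n)
  show ?case
  proof (cases "even n")
    case True
    then show ?thesis by (auto elim: evenE)
  next
    case False
    then obtain m where n: "n = Suc (2 * m)" by (auto elim: oddE)
    then have "m < n" by simp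
    with less have "s (Suc m) \<le> Suc (s m)" by blast
    moreover have "s (Suc n) = s (Suc m)"
      using n s_double[of "Suc m"] by simp
    ultimately show ?thesis using n by simp
  qed
qed

lemma s_add_le: "s (n + t) \<le> s n + t"
proof (induction t)
  case (Suc t)
  then show ?case using s_Suc_le[of "n + t"] by simp
qed simp

definition diff_count :: "int \<Rightarrow> nat \<Rightarrow> nat \<Rightarrow> nat" where
  "diff_count j t N = card {n. n < N \<and> int (s (n + t)) - int (s n) = j}"

lemma delta_eq_lim_diff_count: "delta j t = lim (\<lambda>N. real (diff_count j t N) / real N)"
  by (simp add: delta_def diff_count_def)

lemma card_lessThan_Suc_Collect:
  "card {n. n < Suc N \<and> P n} = card {n. n < N \<and> P n} + (if P N then 1 else 0)"
proof -
  have "{n. n < Suc N \<and> P n} = {n. n < N \<and> P n} \<union> (if P N then {N} else {})"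
    by (auto simp: less_Suc_eq)
  then show ?thesis by (simp add: card_insert_if)
qed

lemma card_lessThan_double_Collect:
  "card {n. n < 2 * N \<and> P n}
     = card {m. m < N \<and> P (2 * m)} + card {m. m < N \<and> P (Suc (2 * m))}"
proof (induction N)
  case (Suc N)
  have "2 * Suc N = Suc (Suc (2 * N))" by simp
  then show ?case using Suc by (simp only: card_lessThan_Suc_Collect)
qed simp

lemma diff_count_Suc:
  "diff_count j t (Suc N) = diff_count j t N + (if int (s (N + t)) - int (s N) = j then 1 else 0)"
  unfolding diff_count_def by (rule card_lessThan_Suc_Collect)

lemma diff_count_0: "diff_count j 0 N = (if j = 0 then N else 0)"
  by (simp add: diff_count_def)

lemma diff_count_eq_0_above:
  assumes "int t < j"
  shows "diff_count j t N = 0"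
proof -
  have "int (s (n + t)) - int (s n) < j" for n
    using s_add_le[of n t] assms by linarith
  then show ?thesis by (force simp: diff_count_def)
qed

lemma diff_count_double: "diff_count j (2 * u) (2 * N) = 2 * diff_count j u N"
proof -
  have "s (2 * m + 2 * u) = s (m + u)" "s (Suc (2 * m) + 2 * u) = Suc (s (m + u))" for m
    by (metis s_double distrib_left, metis s_Suc_double add_Suc distrib_left)
  then show ?thesis
    unfolding diff_count_def card_lessThan_double_Collect by simp
qed

lemma diff_count_Suc_double:
  "diff_count j (Suc (2 * u)) (2 * N) = diff_count (j - 1) u N + diff_count (j + 1) (Suc u) N"
proof -
  have "2 * m + Suc (2 * u) = Suc (2 * (m + u))" "Suc (2 * m) + Suc (2 * u) = 2 * (m + Suc u)" for m
    by simp_all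
  then have "s (2 * m + Suc (2 * u)) = Suc (s (m + u))"
    and "s (Suc (2 * m) + Suc (2 * u)) = s (m + Suc u)" for m
    by (simp_all only: s_double s_Suc_double)
  then have "int (s (2 * m + Suc (2 * u))) - int (s (2 * m)) = j
               \<longleftrightarrow> int (s (m + u)) - int (s m) = j - 1"
    and "int (s (Suc (2 * m) + Suc (2 * u))) - int (s (Suc (2 * m))) = j
               \<longleftrightarrow> int (s (m + Suc u)) - int (s m) = j + 1" for m
    by auto
  then show ?thesis
    unfolding diff_count_def card_lessThan_double_Collect by presburger
qed

lemma LIMSEQ_ratio_of_even_terms:
  fixes a :: "nat \<Rightarrow> nat"
  assumes mono: "\<And>N. a N \<le> a (Suc N)" and step: "\<And>N. a (Suc N) \<le> Suc (a N)"
    and even: "(\<lambda>N. real (a (2 * N)) / real N) \<longlonglongrightarrow> 2 * L"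
  shows "(\<lambda>N. real (a N) / real N) \<longlonglongrightarrow> L"
proof (rule limseq_even_odd)
  let ?even = "\<lambda>N. real (a (2 * N)) / real N"
  show "(\<lambda>N. real (a (2 * N)) / real (2 * N)) \<longlonglongrightarrow> L"
    using tendsto_divide[OF even tendsto_const[of 2]] by (simp add: field_simps)
  have "(\<lambda>N. real N / real (2 * N + 1)) \<longlonglongrightarrow> 1 / 2"
    by real_asymp
  then have lower: "(\<lambda>N. ?even N * (real N / real (2 * N + 1))) \<longlonglongrightarrow> L"
    using tendsto_mult[OF even] by fastforce
  have "(\<lambda>N. 1 / real (2 * N + 1)) \<longlonglongrightarrow> 0"
    by real_asymp
  then have upper: "(\<lambda>N. ?even N * (real N / real (2 * N + 1)) + 1 / real (2 * N + 1)) \<longlonglongrightarrow> L"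
    using tendsto_add[OF lower] by fastforce
  show "(\<lambda>N. real (a (2 * N + 1)) / real (2 * N + 1)) \<longlonglongrightarrow> L"
  proof (rule tendsto_sandwich[OF _ _ lower upper]; rule eventually_sequentiallyI[of 1])
    fix N :: nat
    assume "1 \<le> N"
    then have ratio: "?even N * (real N / real (2 * N + 1)) = real (a (2 * N)) / real (2 * N + 1)"
      by simp
    show "?even N * (real N / real (2 * N + 1)) \<le> real (a (2 * N + 1)) / real (2 * N + 1)"
      unfolding ratio using mono[of "2 * N"] by (simp add: divide_right_mono)
    show "real (a (2 * N + 1)) / real (2 * N + 1)
            \<le> ?even N * (real N / real (2 * N + 1)) + 1 / real (2 * N + 1)"
      unfolding ratio add_divide_distrib[symmetric] using step[of "2 * N"]
      by (simp add: divide_right_mono)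
  qed
qed

lemma diff_count_density_of_halves:
  assumes split: "\<And>N. diff_count j t (2 * N) = a N + b N"
    and "(\<lambda>N. real (a N) / real N) \<longlonglongrightarrow> La" and "(\<lambda>N. real (b N) / real N) \<longlonglongrightarrow> Lb"
  shows "(\<lambda>N. real (diff_count j t N) / real N) \<longlonglongrightarrow> (La + Lb) / 2"
proof (rule LIMSEQ_ratio_of_even_terms)
  show "diff_count j t N \<le> diff_count j t (Suc N)"
    and "diff_count j t (Suc N) \<le> Suc (diff_count j t N)" for N
    by (simp_all add: diff_count_Suc)
  have "(\<lambda>N. real (a N) / real N + real (b N) / real N) \<longlonglongrightarrow> La + Lb"
    by (intro tendsto_add assms)
  then show "(\<lambda>N. real (diff_count j t (2 * N)) / real N) \<longlonglongrightarrow> 2 * ((La + Lb) / 2)"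
    by (simp add: split add_divide_distrib)
qed

text \<open>The case t = 1 is separate because for u = 0 the last step is circular.\<close>

lemma dyadic_induct [case_names zero one double Suc_double]:
  assumes "P 0" and "P 1" and "\<And>u. P u \<Longrightarrow> P (2 * u)"
    and "\<And>u. P u \<Longrightarrow> P (Suc u) \<Longrightarrow> P (Suc (2 * u))"
  shows "P t"
proof (induction t rule: less_induct)
  case (less t)
  define u where "u = t div 2"
  show ?case
  proof (cases "u = 0")
    case True
    then have "t = 0 \<or> t = 1" unfolding u_def by presburger
    then show ?thesis using assms(1,2) by blast
  next
    case False
    then have "u < t" "Suc u < t \<or> t = 2 * u" unfolding u_def by presburger+
    moreover have "t = 2 * u \<or> t = Suc (2 * u)" unfolding u_def by presburger
    ultimately show ?thesis
      using less assms(3,4) by (metis Suc_lessD)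
  qed
qed

lemma diff_count_0_density:
  "(\<lambda>N. real (diff_count j 0 N) / real N) \<longlonglongrightarrow> (if j = 0 then 1 else 0)"
proof (rule Lim_transform_eventually[OF tendsto_const])
  show "\<forall>\<^sub>F N in sequentially. (if j = 0 then 1 else 0) = real (diff_count j 0 N) / real N"
    by (rule eventually_sequentiallyI[of 1]) (simp add: diff_count_0)
qed

lemma diff_count_above_density:
  "int t < j \<Longrightarrow> (\<lambda>N. real (diff_count j t N) / real N) \<longlonglongrightarrow> 0"
  by (simp add: diff_count_eq_0_above)

lemma diff_count_1_density:
  "(\<lambda>N. real (diff_count (1 - int m) 1 N) / real N) \<longlonglongrightarrow> 1 / 2 ^ Suc m"
proof (induction m)
  case 0
  have "diff_count 1 1 (2 * N) = diff_count 0 0 N + diff_count 2 1 N" for N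
    using diff_count_Suc_double[of 1 0 N] by simp
  from diff_count_density_of_halves[OF this diff_count_0_density diff_count_above_density]
  show ?case by simp
next
  case (Suc m)
  have "1 - int (Suc m) + 1 = 1 - int m"
    by simp
  then have "diff_count (1 - int (Suc m)) 1 (2 * N)
               = diff_count (1 - int (Suc m) - 1) 0 N + diff_count (1 - int m) 1 N" for N
    using diff_count_Suc_double[of "1 - int (Suc m)" 0 N] by simp
  from diff_count_density_of_halves[OF this diff_count_0_density Suc.IH]
  show ?case by simp
qed

lemma diff_count_density_exists: "\<exists>L. (\<lambda>N. real (diff_count j t N) / real N) \<longlonglongrightarrow> L"
proof (induction t arbitrary: j rule: dyadic_induct)
  case zero
  then show ?case using diff_count_0_density by blast
next
  case one
  show ?case
  proof (cases "j \<le> 1")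
    case True
    then have "j = 1 - int (nat (1 - j))" by simp
    then show ?thesis using diff_count_1_density by metis
  next
    case False
    then show ?thesis using diff_count_above_density[of 1 j] by auto
  qed
next
  case (double u)
  then obtain L where "(\<lambda>N. real (diff_count j u N) / real N) \<longlonglongrightarrow> L" by blast
  from diff_count_density_of_halves[OF _ this this] show ?case
    by (metis diff_count_double mult_2)
next
  case (Suc_double u)
  then obtain L1 L2
    where "(\<lambda>N. real (diff_count (j - 1) u N) / real N) \<longlonglongrightarrow> L1"
      and "(\<lambda>N. real (diff_count (j + 1) (Suc u) N) / real N) \<longlonglongrightarrow> L2"
    by blast
  from diff_count_density_of_halves[OF diff_count_Suc_double this] show ?case by blast
qed

lemma diff_count_density: "(\<lambda>N. real (diff_count j t N) / real N) \<longlonglongrightarrow> delta j t"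
  using diff_count_density_exists[of j t]
  by (metis convergent_def convergent_LIMSEQ_iff delta_eq_lim_diff_count)

lemma delta_nonneg: "0 \<le> delta j t"
  by (rule LIMSEQ_le_const[OF diff_count_density]) simp

lemma delta_0: "delta j 0 = (if j = 0 then 1 else 0)"
  using LIMSEQ_unique[OF diff_count_density diff_count_0_density] .

lemma delta_eq_0_above: "int t < j \<Longrightarrow> delta j t = 0"
  using LIMSEQ_unique[OF diff_count_density diff_count_above_density] .

lemma delta_1: "delta (1 - int m) 1 = 1 / 2 ^ Suc m"
  using LIMSEQ_unique[OF diff_count_density diff_count_1_density] .

lemma delta_double: "delta j (2 * u) = delta j u"
proof -
  have "diff_count j (2 * u) (2 * N) = diff_count j u N + diff_count j u N" for N
    by (simp add: diff_count_double)
  from LIMSEQ_unique[OF diff_count_density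
      diff_count_density_of_halves[OF this diff_count_density diff_count_density]]
  show ?thesis by simp
qed

lemma delta_Suc_double: "delta j (Suc (2 * u)) = (delta (j - 1) u + delta (j + 1) (Suc u)) / 2"
  using LIMSEQ_unique[OF diff_count_density
      diff_count_density_of_halves[OF diff_count_Suc_double diff_count_density diff_count_density]] .

lemma delta_exponential_bound: "\<exists>A \<ge> 0. \<forall>j. delta j t \<le> A * 2 powr of_int j"
proof (induction t rule: dyadic_induct)
  case zero
  then show ?case by (intro exI[of _ 1]) (simp add: delta_0)
next
  case one
  have "delta j 1 \<le> 2 powr of_int j" for j
  proof (cases "j \<le> 1")
    case True
    define m where "m = nat (1 - j)"
    have m: "j = 1 - int m" using True by (simp add: m_def)
    have "delta j 1 = 1 / 2 ^ Suc m"
      unfolding m by (rule delta_1)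
    also have "\<dots> \<le> 2 powr (1 - real m)"
      by (simp add: powr_diff powr_realpow field_simps)
    finally show ?thesis by (simp add: m)
  qed (simp add: delta_eq_0_above)
  then show ?case by (intro exI[of _ 1]) simp
next
  case (double u)
  then show ?case by (simp add: delta_double)
next
  case (Suc_double u)
  then obtain A B where A: "A \<ge> 0" "\<forall>j. delta j u \<le> A * 2 powr of_int j"
    and B: "B \<ge> 0" "\<forall>j. delta j (Suc u) \<le> B * 2 powr of_int j" by blast
  have "delta j (Suc (2 * u)) \<le> (A + B) * 2 powr of_int j" for j
  proof -
    have "delta j (Suc (2 * u)) = (delta (j - 1) u + delta (j + 1) (Suc u)) / 2"
      by (rule delta_Suc_double)
    also have "\<dots> \<le> (A * 2 powr of_int (j - 1) + B * 2 powr of_int (j + 1)) / 2"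
      using A(2)[rule_format, of "j - 1"] B(2)[rule_format, of "j + 1"]
      by (intro divide_right_mono add_mono) auto
    also have "\<dots> = (A / 4 + B) * 2 powr of_int j"
      by (simp add: powr_diff powr_add field_simps)
    also have "\<dots> \<le> (A + B) * 2 powr of_int j"
      using A by (intro mult_right_mono) auto
    finally show ?thesis .
  qed
  with A B show ?case by (intro exI[of _ "A + B"]) auto
qed

definition charf_domain :: "complex set" where
  "charf_domain = {z. Im z < ln 2 / (2 * pi)}"

lemma open_charf_domain: "open charf_domain"
  by (simp add: charf_domain_def open_halfspace_Im_lt)

lemma zero_in_charf_domain: "0 \<in> charf_domain"
  by (simp add: charf_domain_def)

lemma norm_exp_charf_domain:
  assumes "z \<in> charf_domain"
  shows "norm (exp (- (2 * pi * \<i> * z))) < 2"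
proof -
  have "norm (exp (- (2 * pi * \<i> * z))) = exp (2 * pi * Im z)"
    by simp
  also have "\<dots> < exp (ln 2)"
    using assms pi_gt_zero by (subst exp_less_cancel_iff) (simp add: charf_domain_def field_simps)
  finally show ?thesis by simp
qed

definition delta_series :: "nat \<Rightarrow> complex \<Rightarrow> complex" where
  "delta_series t \<zeta> = (\<Sum>n. complex_of_real (delta (int t - int n) t) * \<zeta> ^ n)"

lemma delta_series_norm_summable:
  assumes "norm \<zeta> < 2"
  shows "summable (\<lambda>n. norm (complex_of_real (delta (int t - int n) t) * \<zeta> ^ n))"
proof -
  obtain A where A: "A \<ge> 0" "\<forall>j. delta j t \<le> A * 2 powr of_int j"
    using delta_exponential_bound by blast
  have bound: "norm (complex_of_real (delta (int t - int n) t) * \<zeta> ^ n)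
                \<le> A * 2 ^ t * (norm \<zeta> / 2) ^ n" for n
  proof -
    have "norm (complex_of_real (delta (int t - int n) t) * \<zeta> ^ n)
            = delta (int t - int n) t * norm \<zeta> ^ n"
      by (simp add: norm_mult norm_power delta_nonneg)
    also have "\<dots> \<le> A * 2 powr of_int (int t - int n) * norm \<zeta> ^ n"
      using A(2)[rule_format, of "int t - int n"] by (intro mult_right_mono) auto
    also have "(2::real) powr of_int (int t - int n) = 2 ^ t / 2 ^ n"
      by (simp add: powr_diff powr_realpow)
    finally show ?thesis by (simp add: power_divide)
  qed
  have "summable (\<lambda>n. A * 2 ^ t * (norm \<zeta> / 2) ^ n)"
    using assms by (intro summable_mult summable_geometric) simp
  then show ?thesis
    by (rule summable_comparison_test'[where N = 0]) (use bound in simp)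
qed

lemma delta_series_sums:
  "norm \<zeta> < 2 \<Longrightarrow> (\<lambda>n. complex_of_real (delta (int t - int n) t) * \<zeta> ^ n) sums delta_series t \<zeta>"
  unfolding delta_series_def
  by (rule summable_sums[OF summable_norm_cancel[OF delta_series_norm_summable]])

lemma delta_series_holomorphic: "delta_series t holomorphic_on ball 0 2"
  by (rule power_series_holomorphic[where a = "\<lambda>n. complex_of_real (delta (int t - int n) t)"])
    (simp add: delta_series_sums)

lemma has_sum_int_from_downward:
  fixes f :: "int \<Rightarrow> 'a :: {comm_monoid_add, topological_space}"
  assumes "((\<lambda>n. f (c - int n)) has_sum S) UNIV" and "\<And>k. c < k \<Longrightarrow> f k = 0"
  shows "(f has_sum S) UNIV"
proof -
  have "(f has_sum S) {k. k \<le> c} \<longleftrightarrow> ((\<lambda>n. f (c - int n)) has_sum S) UNIV"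
    by (rule has_sum_reindex_bij_witness[where j = "\<lambda>k. nat (c - k)" and i = "\<lambda>n. c - int n"])
      auto
  with assms(1) have "(f has_sum S) {k. k \<le> c}" by blast
  then show ?thesis
    by (rule has_sum_cong_neutral[THEN iffD1, rotated -1]) (auto intro: assms(2))
qed

lemma charf_has_sum_delta_series:
  assumes "z \<in> charf_domain"
  shows "((\<lambda>k. complex_of_real (delta k t) * exp (2 * pi * \<i> * of_int k * z))
           has_sum exp (2 * pi * \<i> * of_nat t * z) * delta_series t (exp (- (2 * pi * \<i> * z)))) UNIV"
proof (rule has_sum_int_from_downward)
  let ?\<zeta> = "exp (- (2 * pi * \<i> * z))" and ?c = "exp (2 * pi * \<i> * of_nat t * z)"
  have "((\<lambda>n. ?c * (complex_of_real (delta (int t - int n) t) * ?\<zeta> ^ n)) has_sum ?c * delta_series t ?\<zeta>) UNIV"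
    using norm_exp_charf_domain[OF assms]
    by (intro has_sum_cmult_right norm_summable_imp_has_sum delta_series_norm_summable delta_series_sums)
  moreover have "?c * ?\<zeta> ^ n = exp (2 * pi * \<i> * of_int (int t - int n) * z)" for n
  proof -
    have "2 * pi * \<i> * of_int (int t - int n) * z = 2 * pi * \<i> * of_nat t * z + of_nat n * (- (2 * pi * \<i> * z))"
      by (simp add: algebra_simps)
    then show ?thesis by (simp only: exp_add exp_of_nat_mult)
  qed
  ultimately show "((\<lambda>n. complex_of_real (delta (int t - int n) t) * exp (2 * pi * \<i> * of_int (int t - int n) * z))
      has_sum ?c * delta_series t ?\<zeta>) UNIV"
    by (simp add: mult.left_commute)
qed (simp add: delta_eq_0_above)

lemma charf_eq_delta_series:
  "z \<in> charf_domain \<Longrightarrow>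
     charf t z = exp (2 * pi * \<i> * of_nat t * z) * delta_series t (exp (- (2 * pi * \<i> * z)))"
  unfolding charf_def by (rule infsumI[OF charf_has_sum_delta_series])

lemma charf_has_sum:
  "z \<in> charf_domain \<Longrightarrow>
     ((\<lambda>k. complex_of_real (delta k t) * exp (2 * pi * \<i> * of_int k * z)) has_sum charf t z) UNIV"
  using charf_has_sum_delta_series charf_eq_delta_series by simp

lemma charf_holomorphic: "charf t holomorphic_on charf_domain"
proof -
  have "(delta_series t \<circ> (\<lambda>z. exp (- (2 * pi * \<i> * z)))) holomorphic_on charf_domain"
    using delta_series_holomorphic norm_exp_charf_domain
    by (intro holomorphic_on_compose_gen holomorphic_intros) auto
  then have "(\<lambda>z. exp (2 * pi * \<i> * of_nat t * z) * delta_series t (exp (- (2 * pi * \<i> * z))))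
      holomorphic_on charf_domain"
    by (intro holomorphic_intros) (simp add: o_def)
  then show ?thesis
    by (rule holomorphic_transform) (simp add: charf_eq_delta_series)
qed

lemma charf_0: "charf 0 z = 1"
  unfolding charf_def by (rule infsumI, rule has_sum_finite_neutralI[of "{0}"]) (auto simp: delta_0)

lemma charf_double: "charf (2 * u) = charf u"
  by (simp add: fun_eq_iff charf_def delta_double)

lemma has_sum_int_shift:
  fixes f :: "int \<Rightarrow> 'a :: {comm_monoid_add, topological_space}"
  assumes "(f has_sum S) UNIV"
  shows "((\<lambda>k. f (k + d)) has_sum S) UNIV"
  using assms
  by (subst has_sum_reindex_bij_witness[where j = "\<lambda>k. k + d" and i = "\<lambda>k. k - d"]) auto

lemma charf_Suc_double:
  assumes z: "z \<in> charf_domain"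
  shows "2 * charf (Suc (2 * u)) z
           = exp (2 * pi * \<i> * z) * charf u z + exp (- (2 * pi * \<i> * z)) * charf (Suc u) z"
proof -
  define e where "e k = exp (2 * pi * \<i> * of_int k * z)" for k
  have shift: "exp (2 * pi * \<i> * z) * e (k - 1) = e k"
      "exp (- (2 * pi * \<i> * z)) * e (k + 1) = e k" for k
    unfolding e_def by (simp_all add: algebra_simps flip: exp_add)
  have "((\<lambda>k. exp (2 * pi * \<i> * z) * (complex_of_real (delta (k - 1) u) * e (k - 1))
            + exp (- (2 * pi * \<i> * z)) * (complex_of_real (delta (k + 1) (Suc u)) * e (k + 1)))
         has_sum exp (2 * pi * \<i> * z) * charf u z + exp (- (2 * pi * \<i> * z)) * charf (Suc u) z) UNIV"
    using charf_has_sum[OF z, of u, THEN has_sum_int_shift[where d = "-1"]]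
      charf_has_sum[OF z, of "Suc u", THEN has_sum_int_shift[where d = 1]]
    unfolding e_def by (intro has_sum_add has_sum_cmult_right) simp_all
  moreover have "exp (2 * pi * \<i> * z) * (complex_of_real (delta (k - 1) u) * e (k - 1))
            + exp (- (2 * pi * \<i> * z)) * (complex_of_real (delta (k + 1) (Suc u)) * e (k + 1))
        = 2 * (complex_of_real (delta k (Suc (2 * u))) * e k)" (is "?lhs = _") for k
  proof -
    have "?lhs = complex_of_real (delta (k - 1) u) * (exp (2 * pi * \<i> * z) * e (k - 1))
        + complex_of_real (delta (k + 1) (Suc u)) * (exp (- (2 * pi * \<i> * z)) * e (k + 1))"
      by (simp only: mult_ac)
    also have "\<dots> = complex_of_real (delta (k - 1) u + delta (k + 1) (Suc u)) * e k"
      by (simp only: shift) (simp add: distrib_right)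
    also have "\<dots> = 2 * (complex_of_real (delta k (Suc (2 * u))) * e k)"
      by (simp add: delta_Suc_double)
    finally show ?thesis .
  qed
  moreover have "((\<lambda>k. 2 * (complex_of_real (delta k (Suc (2 * u))) * e k))
                   has_sum 2 * charf (Suc (2 * u)) z) UNIV"
    unfolding e_def by (intro has_sum_cmult_right charf_has_sum z)
  ultimately show ?thesis
    using has_sum_unique by fastforce
qed

text \<open>The moment-cumulant recursion: Leibniz' rule applied to F' = (Ln F)' F.\<close>

lemma higher_deriv_Suc_eq_sum_higher_deriv_Ln:
  assumes holF: "F holomorphic_on S" and S: "open S" "0 \<in> S" and F0: "F 0 = 1"
  shows "(deriv ^^ Suc n) F 0
           = (\<Sum>i = 0..n. of_nat (n choose i) * (deriv ^^ Suc i) (\<lambda>z. Ln (F z)) 0 * (deriv ^^ (n - i)) F 0)"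
proof -
  define U where "U = S \<inter> F -` ball 1 1"
  have U: "open U" "0 \<in> U" "U \<subseteq> S"
    using continuous_open_preimage[OF holomorphic_on_imp_continuous_on[OF holF] S(1) open_ball] S F0
    by (auto simp: U_def)
  have F_U: "F holomorphic_on U"
    using holF U(3) by (rule holomorphic_on_subset)
  have F_slit: "F z \<notin> \<real>\<^sub>\<le>\<^sub>0" if "z \<in> U" for z
  proof -
    have "\<bar>Re (1 - F z)\<bar> < 1"
      using that abs_Re_le_cmod[of "1 - F z"] by (simp add: U_def dist_norm)
    then show ?thesis by (simp add: complex_nonpos_Reals_iff)
  qed
  define L where "L = (\<lambda>z. Ln (F z))"
  have L_U: "L holomorphic_on U"
    unfolding L_def using F_U F_slit by (intro holomorphic_intros) auto
  have deriv_F: "deriv F z = deriv L z * F z" if z: "z \<in> U" for z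
  proof -
    have "(L has_field_derivative inverse (F z) * deriv F z) (at z)"
      unfolding L_def using holomorphic_derivI[OF F_U U(1) z]
      by (rule DERIV_chain2[where f = Ln and g = F, OF has_field_derivative_Ln[OF F_slit[OF z]]])
    moreover have "F z \<noteq> 0" using F_slit[OF z] by auto
    ultimately show ?thesis by (simp add: DERIV_imp_deriv field_simps)
  qed
  have "(deriv ^^ Suc n) F 0 = (deriv ^^ n) (\<lambda>z. deriv L z * F z) 0"
    unfolding funpow_Suc_right o_def
    by (rule higher_deriv_cong_ev[OF _ refl])
      (use eventually_nhds_in_open[OF U(1,2)] deriv_F in \<open>auto elim!: eventually_mono\<close>)
  also have "\<dots> = (\<Sum>i = 0..n. of_nat (n choose i) * (deriv ^^ i) (deriv L) 0 * (deriv ^^ (n - i)) F 0)"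
    by (rule higher_deriv_mult[OF holomorphic_deriv[OF L_U U(1)] F_U U(1,2)])
  finally show ?thesis
    by (simp only: funpow_Suc_right o_def L_def)
qed

lemma higher_deriv_Ln_2_3_centred:
  assumes "F holomorphic_on S" "open S" "0 \<in> S" "F 0 = 1" and F1: "deriv F 0 = 0"
  shows "(deriv ^^ 2) (\<lambda>z. Ln (F z)) 0 = (deriv ^^ 2) F 0"
    and "(deriv ^^ 3) (\<lambda>z. Ln (F z)) 0 = (deriv ^^ 3) F 0"
proof -
  note rec = higher_deriv_Suc_eq_sum_higher_deriv_Ln[OF assms(1-4)]
  have L1: "(deriv ^^ 1) (\<lambda>z. Ln (F z)) 0 = 0"
    using rec[of 0] F1 assms(4) by simp
  show "(deriv ^^ 2) (\<lambda>z. Ln (F z)) 0 = (deriv ^^ 2) F 0"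
    using rec[of 1] F1 assms(4) by (simp add: numeral_2_eq_2)
  show "(deriv ^^ 3) (\<lambda>z. Ln (F z)) 0 = (deriv ^^ 3) F 0"
    using rec[of 2] F1 L1 assms(4) by (simp add: numeral_3_eq_3 numeral_2_eq_2)
qed

lemma higher_deriv_exp_linear: "(deriv ^^ n) (\<lambda>w. exp (c * w)) z = c ^ n * exp (c * z)"
proof (induction n arbitrary: z)
  case (Suc n)
  have "(deriv ^^ n) (\<lambda>w. exp (c * w)) = (\<lambda>w. c ^ n * exp (c * w))"
    using Suc by (simp add: fun_eq_iff)
  moreover have "((\<lambda>w. c ^ n * exp (c * w)) has_field_derivative c ^ Suc n * exp (c * z)) (at z)"
    by (auto intro!: derivative_eq_intros)
  ultimately show ?case
    by (simp add: DERIV_imp_deriv)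
qed simp

lemma higher_deriv_exp_mult:
  assumes "f holomorphic_on S" "open S" "z \<in> S"
  shows "(deriv ^^ n) (\<lambda>w. exp (c * w) * f w) z
           = (\<Sum>i = 0..n. of_nat (n choose i) * c ^ i * exp (c * z) * (deriv ^^ (n - i)) f z)"
  by (subst higher_deriv_mult[OF _ assms])
    (auto intro!: holomorphic_intros simp: higher_deriv_exp_linear mult.assoc)

text \<open>moment n t is (2 pi i)^n times the n-th moment of delta(-, t).\<close>

definition moment :: "nat \<Rightarrow> nat \<Rightarrow> complex" where
  "moment n t = (deriv ^^ n) (charf t) 0"

lemma moment_at_0: "moment n 0 = (if n = 0 then 1 else 0)"
proof -
  have "charf 0 = (\<lambda>z. 1)" by (simp add: fun_eq_iff charf_0)
  then show ?thesis by (simp add: moment_def)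
qed

lemma moment_double: "moment n (2 * u) = moment n u"
  by (simp add: moment_def charf_double)

lemma moment_Suc_double:
  "2 * moment n (Suc (2 * u))
     = (\<Sum>i = 0..n. of_nat (n choose i) * (2 * pi * \<i>) ^ i * moment (n - i) u)
     + (\<Sum>i = 0..n. of_nat (n choose i) * (- (2 * pi * \<i>)) ^ i * moment (n - i) (Suc u))"
proof -
  let ?w = "2 * pi * \<i> :: complex"
  note domain = open_charf_domain zero_in_charf_domain
  have "2 * moment n (Suc (2 * u)) = (deriv ^^ n) (\<lambda>z. 2 * charf (Suc (2 * u)) z) 0"
    unfolding moment_def
    by (rule higher_deriv_cmult[OF charf_holomorphic zero_in_charf_domain open_charf_domain, symmetric])
  also have "\<dots> = (deriv ^^ n) (\<lambda>z. exp (?w * z) * charf u z + exp ((- ?w) * z) * charf (Suc u) z) 0"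
    by (rule higher_deriv_cong_ev[OF _ refl])
      (use eventually_nhds_in_open[OF domain] in \<open>auto elim!: eventually_mono simp: charf_Suc_double\<close>)
  also have "\<dots> = (deriv ^^ n) (\<lambda>z. exp (?w * z) * charf u z) 0
                  + (deriv ^^ n) (\<lambda>z. exp ((- ?w) * z) * charf (Suc u) z) 0"
    by (intro higher_deriv_add[where S = charf_domain] holomorphic_intros charf_holomorphic domain)
  also have "\<dots> = (\<Sum>i = 0..n. of_nat (n choose i) * ?w ^ i * moment (n - i) u)
                  + (\<Sum>i = 0..n. of_nat (n choose i) * (- ?w) ^ i * moment (n - i) (Suc u))"
    by (simp only: higher_deriv_exp_mult[OF charf_holomorphic domain]) (simp add: moment_def)
  finally show ?thesis .
qed

lemma moment_0_and_1: "moment 0 t = 1 \<and> moment 1 t = 0"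
proof (induction t rule: dyadic_induct)
  case zero
  then show ?case by (simp add: moment_at_0)
next
  case one
  have "2 * moment 0 1 = moment 0 0 + moment 0 1"
    using moment_Suc_double[of 0 0] by simp
  then have m0: "moment 0 1 = 1"
    by (simp add: moment_at_0)
  have "2 * moment 1 1
          = moment 1 0 + 2 * pi * \<i> * moment 0 0 + (moment 1 1 - 2 * pi * \<i> * moment 0 1)"
    using moment_Suc_double[of 1 0] by simp
  with m0 show ?case
    by (simp add: moment_at_0)
next
  case (double u)
  then show ?case by (simp add: moment_double)
next
  case (Suc_double u)
  then show ?case
    using moment_Suc_double[of 0 u] moment_Suc_double[of 1 u] by simp
qed

lemma moment_2_Suc_double:
  "2 * moment 2 (Suc (2 * u)) = moment 2 u + moment 2 (Suc u) + 2 * (2 * pi * \<i>) ^ 2"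
  using moment_Suc_double[of 2 u] moment_0_and_1[of u] moment_0_and_1[of "Suc u"]
  by (simp add: numeral_2_eq_2 algebra_simps)

lemma moment_3_Suc_double:
  "2 * moment 3 (Suc (2 * u))
     = moment 3 u + moment 3 (Suc u) + 3 * (2 * pi * \<i>) * (moment 2 u - moment 2 (Suc u))"
proof -
  let ?w = "2 * pi * \<i> :: complex"
  have "2 * moment 3 (Suc (2 * u))
      = moment 3 u + 3 * ?w * moment 2 u + 3 * ?w ^ 2 * moment 1 u + ?w ^ 3 * moment 0 u
      + (moment 3 (Suc u) - 3 * ?w * moment 2 (Suc u) + 3 * ?w ^ 2 * moment 1 (Suc u)
         - ?w ^ 3 * moment 0 (Suc u))"
    using moment_Suc_double[of 3 u] by (simp add: numeral_3_eq_3 numeral_2_eq_2 algebra_simps)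
  then show ?thesis
    using moment_0_and_1[of u] moment_0_and_1[of "Suc u"] by (simp add: algebra_simps)
qed

lemma kappa_eq_moment:
  shows kappa_2_eq_moment: "kappa 2 t = moment 2 t / (2 * pi * \<i>) ^ 2"
    and kappa_3_eq_moment: "kappa 3 t = moment 3 t / (2 * pi * \<i>) ^ 3"
  using higher_deriv_Ln_2_3_centred[OF charf_holomorphic open_charf_domain zero_in_charf_domain]
    moment_0_and_1[of t]
  by (simp_all add: kappa_def moment_def)

lemma kappa_double: "kappa j (2 * u) = kappa j u"
  by (simp add: kappa_def charf_double)

lemma kappa_pow2_mult: "kappa j (2 ^ k * m) = kappa j m"
  by (induction k) (simp_all add: kappa_double mult.assoc)

lemma D_pow2_mult: "D (2 ^ k * m) = D m"
  by (simp add: D_def kappa_pow2_mult)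

lemma kappa_2_Suc_double: "kappa 2 (Suc (2 * u)) = (kappa 2 u + kappa 2 (Suc u)) / 2 + 1"
  using moment_2_Suc_double[of u] by (simp add: kappa_2_eq_moment field_simps)

lemma kappa_3_Suc_double:
  "kappa 3 (Suc (2 * u)) = (kappa 3 u + kappa 3 (Suc u)) / 2 + 3 / 2 * (kappa 2 u - kappa 2 (Suc u))"
proof -
  let ?w = "2 * pi * \<i> :: complex"
  have "kappa 3 (Suc (2 * u)) = 2 * moment 3 (Suc (2 * u)) / (2 * ?w ^ 3)"
    by (simp add: kappa_3_eq_moment)
  also have "\<dots> = (moment 3 u + moment 3 (Suc u) + 3 * ?w * (moment 2 u - moment 2 (Suc u))) / (2 * ?w ^ 3)"
    by (simp only: moment_3_Suc_double)
  also have "\<dots> = (kappa 3 u + kappa 3 (Suc u)) / 2 + 3 / 2 * (kappa 2 u - kappa 2 (Suc u))"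
    by (simp add: kappa_eq_moment field_simps power2_eq_square power3_eq_cube)
  finally show ?thesis .
qed

lemma D_Suc_double: "D (Suc (2 * u)) = (D u + D (Suc u)) / 2 + (kappa 2 (Suc u) - kappa 2 u) / 2 + 1"
  unfolding D_def kappa_2_Suc_double kappa_3_Suc_double by (simp add: field_simps)

text \<open>In binary, 2^(k+1) t + 2^k - 1 is t followed by a zero and k ones.\<close>

lemma zero_ones_suffix_Suc:
  fixes t k :: nat
  shows "2 ^ (Suc k + 1) * t + 2 ^ Suc k - 1 = Suc (2 * (2 ^ (k + 1) * t + 2 ^ k - 1))"
    and "Suc (2 ^ (k + 1) * t + 2 ^ k - 1) = 2 ^ k * Suc (2 * t)"
proof -
  obtain q where "2 ^ k = Suc q" using not0_implies_Suc[of "2 ^ k"] by auto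
  then show "2 ^ (Suc k + 1) * t + 2 ^ Suc k - 1 = Suc (2 * (2 ^ (k + 1) * t + 2 ^ k - 1))"
    and "Suc (2 ^ (k + 1) * t + 2 ^ k - 1) = 2 ^ k * Suc (2 * t)"
    by (simp_all add: algebra_simps)
qed

lemma kappa_2_zero_ones_suffix:
  fixes t k :: nat
  shows "kappa 2 (2 ^ (k + 1) * t + 2 ^ k - 1)
           = (2 ^ k + 1) * kappa 2 t / 2 ^ (k + 1) + (2 ^ k - 1) * kappa 2 (t + 1) / 2 ^ (k + 1)
             + 3 * (2 ^ k - 1) / 2 ^ k"
proof (induction k)
  case 0
  then show ?case by (simp add: kappa_double)
next
  case (Suc k)
  define T where "T = 2 ^ (k + 1) * t + 2 ^ k - 1"
  define X :: complex where "X = 2 ^ k"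
  have X: "X \<noteq> 0" "(2::complex) ^ (k + 1) = 2 * X" "(2::complex) ^ Suc k = 2 * X"
    "(2::complex) ^ (Suc k + 1) = 4 * X"
    by (simp_all add: X_def)
  have IH: "kappa 2 T = (X + 1) * kappa 2 t / (2 * X) + (X - 1) * kappa 2 (t + 1) / (2 * X) + 3 * (X - 1) / X"
    using Suc.IH by (simp only: T_def[symmetric] X(2) flip: X_def)
  have kappa_Suc_T: "kappa 2 (Suc T) = (kappa 2 t + kappa 2 (t + 1)) / 2 + 1"
    unfolding T_def zero_ones_suffix_Suc(2) kappa_pow2_mult kappa_2_Suc_double by simp
  show ?case
    unfolding zero_ones_suffix_Suc(1) T_def[symmetric] kappa_2_Suc_double IH kappa_Suc_T X(3,4)
    using X(1) by (simp add: field_simps flip: X_def)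
qed

lemma D_zero_ones_suffix:
  fixes t k :: nat
  shows "D (2 ^ (k + 1) * t + 2 ^ k - 1)
           = (2 ^ k + 1) / 2 ^ (k + 1) * D t + (2 ^ k - 1) / 2 ^ (k + 1) * D (t + 1)
             + (1 / 2 + (of_nat k - 1) / 2 ^ (k + 1)) * (kappa 2 (t + 1) - kappa 2 t)
             + 1 + (3 * of_nat k - 1) / 2 ^ k"
proof (induction k)
  case 0
  then show ?case by (simp add: D_def kappa_double)
next
  case (Suc k)
  define T where "T = 2 ^ (k + 1) * t + 2 ^ k - 1"
  define X :: complex where "X = 2 ^ k"
  have X: "X \<noteq> 0" "(2::complex) ^ (k + 1) = 2 * X" "(2::complex) ^ Suc k = 2 * X"
    "(2::complex) ^ (Suc k + 1) = 4 * X"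
    by (simp_all add: X_def)
  have IH: "D T = (X + 1) / (2 * X) * D t + (X - 1) / (2 * X) * D (t + 1)
      + (1 / 2 + (of_nat k - 1) / (2 * X)) * (kappa 2 (t + 1) - kappa 2 t) + 1 + (3 * of_nat k - 1) / X"
    using Suc.IH by (simp only: T_def[symmetric] X(2) flip: X_def)
  have kappa_T: "kappa 2 T = (X + 1) * kappa 2 t / (2 * X) + (X - 1) * kappa 2 (t + 1) / (2 * X) + 3 * (X - 1) / X"
    using kappa_2_zero_ones_suffix[of k t] by (simp only: T_def[symmetric] X(2) flip: X_def)
  have kappa_Suc_T: "kappa 2 (Suc T) = (kappa 2 t + kappa 2 (t + 1)) / 2 + 1"
    unfolding T_def zero_ones_suffix_Suc(2) kappa_pow2_mult kappa_2_Suc_double by simp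
  have D_Suc_T: "D (Suc T) = (D t + D (t + 1)) / 2 + (kappa 2 (t + 1) - kappa 2 t) / 2 + 1"
    unfolding T_def zero_ones_suffix_Suc(2) D_pow2_mult D_Suc_double by simp
  show ?case
    unfolding zero_ones_suffix_Suc(1) T_def[symmetric] D_Suc_double IH kappa_T kappa_Suc_T D_Suc_T X(3,4)
    using X(1) by (simp add: field_simps flip: X_def)
qed

theorem lemma2p10:
  fixes t k :: nat
  shows "(kappa 2 (2^(k+1) * t + 2^k - 1) =
           (2^k + 1) * kappa 2 t / 2^(k+1) + (2^k - 1) * kappa 2 (t+1) / 2^(k+1)
           + 3 * (2^k - 1) / 2^k) \<and>
         (D (2^(k+1) * t + 2^k - 1) =
           (2^k + 1) / 2^(k+1) * D t + (2^k - 1) / 2^(k+1) * D (t+1)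
           + (1/2 + (of_nat k - 1) / 2^(k+1)) * (kappa 2 (t+1) - kappa 2 t)
           + 1 + (3 * of_nat k - 1) / 2^k)"
  using kappa_2_zero_ones_suffix D_zero_ones_suffix by blast

end
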